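(* Let $A\in\mathbb R^{n\times n}$ be symmetric with bandwidth $b$, where $1<b<n$, and let $Q\in\mathbb R^{2n\times 2n}$ be the orthogonal matrix produced by Algorithm 2 (described in the context) applied to $A$. Then for every $1\le k<n$, the matrices $Q(1{:}k,\,k{+}1{:}n)$ and $Q(n{+}1{:}n{+}k,\,k{+}1{:}n)$ have rank at most $2b$.
   Context: A matrix has bandwidth $b$ if its $(i,j)$ entry vanishes whenever $|i-j|>b$. A Givens rotation on rows $p\ne q$ is an orthogonal matrix $G\in\mathbb R^{2n\times 2n}$ equal to the identity except in the entries $(p,p),(p,q),(q,p),(q,q)$, which form a $2\times2$ rotation $\begin{bmatrix}c&s\\-s&c\end{bmatrix}$, $c^2+s^2=1$. "Rotate rows $p,q$ to annihilate $R(q,j)$" means: choose such a $G$ for which $(G^{T}R)(q,j)=0$ and then update $R\leftarrow G^{T}R$, $Q\leftarrow QG$. Algorithm 2: Initialize $Q=I_{2n}$, $R=\begin{bmatrix}A\\ I_n\end{bmatrix}\in\mathbb R^{2n\times n}$. First rotate rows $1,n+1$ to annihilate $R(n+1,1)$; then for $j=2,\dots,\min\{n,b+1\}$ rotate rows $1,j$ to annihilate $R(j,1)$. Then for $i=2,\dots,n$: (a) rotate rows $n+1,n+i$ to annihilate $R(n+i,i)$; (b) for $j=i+1,\dots,\min\{n,b+i-1\}$, rotate rows $n+j,n+i$ to annihilate $R(n+i,j)$; (c) rotate rows $i,n+1$ to annihilate $R(n+1,i)$; (d) if $i<n$, for $j=i+1,\dots,\min\{n,b+i\}$ rotate rows $i,j$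 to annihilate $R(j,i)$. On output $QR=\begin{bmatrix}A\\ I\end{bmatrix}$ with $R$ upper triangular. Notation $Q(a{:}b,c{:}d)$ denotes the submatrix with rows $a,\dots,b$ and columns $c,\dots,d$. *)

theory Defs
  imports "Jordan_Normal_Form.DL_Rank_Submatrix"
begin

(* Matrices are Jordan_Normal_Form matrices (0-based indices).  All index
   data of Algorithm 2 below is written 1-based, as in the paper; the entry
   (i,j) in 1-based notation is  M $$ (i-1, j-1). *)

definition bandwidth_le :: "real mat \<Rightarrow> nat \<Rightarrow> bool" where
  "bandwidth_le A b \<longleftrightarrow>
     (\<forall>i<dim_row A. \<forall>j<dim_col A. (if i \<le> j then j - i else i - j) > b \<longrightarrow> A $$ (i,j) = 0)"

definition givens_mat :: "nat \<Rightarrow> nat \<Rightarrow> nat \<Rightarrow> real \<Rightarrow> real \<Rightarrow> real mat" where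
  "givens_mat N p q c s = mat N N (\<lambda>(i,j).
      if i = p - 1 \<and> j = p - 1 then c
      else if i = p - 1 \<and> j = q - 1 then s
      else if i = q - 1 \<and> j = p - 1 then - s
      else if i = q - 1 \<and> j = q - 1 then c
      else if i = j then 1 else 0)"

definition is_givens :: "nat \<Rightarrow> nat \<Rightarrow> nat \<Rightarrow> real mat \<Rightarrow> bool" where
  "is_givens N p q G \<longleftrightarrow> p \<noteq> q \<and> 1 \<le> p \<and> p \<le> N \<and> 1 \<le> q \<and> q \<le> N \<and>
     (\<exists>c s. c\<^sup>2 + s\<^sup>2 = 1 \<and> G = givens_mat N p q c s)"

(* A step (p, q, j): rotate rows p, q to annihilate R(q, j)  (1-based) *)
definition alg2_steps :: "nat \<Rightarrow> nat \<Rightarrow> (nat \<times> nat \<times> nat) list" where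
  "alg2_steps n b =
     [(1, n + 1, 1)] @
     map (\<lambda>j. (1, j, 1)) [2..<min n (b + 1) + 1] @
     concat (map (\<lambda>i.
        [(n + 1, n + i, i)] @
        map (\<lambda>j. (n + j, n + i, j)) [i + 1..<min n (b + i - 1) + 1] @
        [(i, n + 1, i)] @
        (if i < n then map (\<lambda>j. (i, j, i)) [i + 1..<min n (b + i) + 1] else []))
      [2..<n + 1])"

inductive alg2_run :: "nat \<Rightarrow> (nat \<times> nat \<times> nat) list \<Rightarrow> real mat \<Rightarrow> real mat \<Rightarrow> real mat \<Rightarrow> real mat \<Rightarrow> bool"
  for N where
  run_nil: "alg2_run N [] R Q R Q"
| run_cons: "is_givens N p q G \<Longrightarrow> (transpose_mat G * R) $$ (q - 1, j - 1) = 0 \<Longrightarrow>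
         alg2_run N st (transpose_mat G * R) (Q * G) R' Q' \<Longrightarrow>
         alg2_run N ((p, q, j) # st) R Q R' Q'"

end

theory Submission
  imports Defs
begin

text \<open>Algorithm 2 only multiplies by rotations, so \<open>Q\<close> stays orthogonal with
  \<open>Q R = [A; I]\<close>, and following the zero pattern of \<open>R\<close> through the loops shows that no
  rotation destroys an earlier zero, so \<open>R\<close> ends upper triangular.

  Let \<open>W\<close> and \<open>V\<close> be the upper and lower \<open>n \<times> n\<close> blocks of the first \<open>n\<close> columns
  of \<open>Q\<close>. Then \<open>[A; I] = [W; V] R\<^sub>1\<close> forces \<open>W = A V\<close>, and \<open>R = Q\<^sup>T [A; I]\<close> being upper
  triangular makes \<open>A W + V\<close> lower triangular. For a column \<open>c > k\<close>, the first \<open>k\<close>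
  entries of \<open>W\<close> and \<open>V\<close> therefore solve a \<open>2k \<times> 2k\<close> system with matrix
  \<open>[A\<^sub>1\<^sub>1, I; I, -A\<^sub>1\<^sub>1]\<close>, invertible since \<open>A\<^sub>1\<^sub>1\<close> is symmetric, whose right-hand side
  involves only \<open>A(1:k, k+1:n)\<close>. By the bandwidth that block has at most \<open>b\<close> nonzero
  rows, so all these columns lie in the span of \<open>2b\<close> fixed vectors.\<close>

lemma givens_mat_dim [simp]:
  "dim_row (givens_mat N p q c s) = N" "dim_col (givens_mat N p q c s) = N"
  unfolding givens_mat_def by simp_all

lemma givens_mat_carrier [simp]: "givens_mat N p q c s \<in> carrier_mat N N"
  by (simp add: carrier_matI)

lemma givens_mat_index:
  assumes "p \<noteq> q" "1 \<le> p" "1 \<le> q" "l < N" "i < N"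
  shows "givens_mat N p q c s $$ (l, i) =
    (if l = p - 1 then (if i = p - 1 then c else if i = q - 1 then s else 0)
     else if l = q - 1 then (if i = p - 1 then - s else if i = q - 1 then c else 0)
     else if l = i then 1 else 0)"
  using assms unfolding givens_mat_def by auto

lemma transpose_givens_mult_index:
  assumes pq: "p \<noteq> q" "1 \<le> p" "p \<le> N" "1 \<le> q" "q \<le> N"
    and R: "R \<in> carrier_mat N m" and i: "i < N" and j: "j < m"
  shows "(transpose_mat (givens_mat N p q c s) * R) $$ (i, j) =
    (if i = p - 1 then c * R $$ (p - 1, j) - s * R $$ (q - 1, j)
     else if i = q - 1 then s * R $$ (p - 1, j) + c * R $$ (q - 1, j)
     else R $$ (i, j))"
proof -
  let ?G = "givens_mat N p q c s"
  have "(transpose_mat ?G * R) $$ (i, j) = (\<Sum>l<N. ?G $$ (l, i) * R $$ (l, j))"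
    using R i j by (simp add: scalar_prod_def lessThan_atLeast0 mult.commute)
  also have "\<dots> = (\<Sum>l<N. (if l = p - 1 then ?G $$ (p - 1, i) * R $$ (p - 1, j) else 0)
      + (if l = q - 1 then ?G $$ (q - 1, i) * R $$ (q - 1, j) else 0)
      + (if l = i \<and> i \<noteq> p - 1 \<and> i \<noteq> q - 1 then R $$ (i, j) else 0))"
  proof (rule sum.cong[OF refl])
    fix l assume "l \<in> {..<N}"
    then show "?G $$ (l, i) * R $$ (l, j) = (if l = p - 1 then ?G $$ (p - 1, i) * R $$ (p - 1, j) else 0)
      + (if l = q - 1 then ?G $$ (q - 1, i) * R $$ (q - 1, j) else 0)
      + (if l = i \<and> i \<noteq> p - 1 \<and> i \<noteq> q - 1 then R $$ (i, j) else 0)"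
      using pq i by (auto simp: givens_mat_index)
  qed
  also have "\<dots> = ?G $$ (p - 1, i) * R $$ (p - 1, j) + ?G $$ (q - 1, i) * R $$ (q - 1, j)
      + (if i \<noteq> p - 1 \<and> i \<noteq> q - 1 then R $$ (i, j) else 0)"
    using pq i by (simp add: sum.distrib, linarith)
  also have "\<dots> = (if i = p - 1 then c * R $$ (p - 1, j) - s * R $$ (q - 1, j)
     else if i = q - 1 then s * R $$ (p - 1, j) + c * R $$ (q - 1, j)
     else R $$ (i, j))"
    using pq i by (auto simp: givens_mat_index)
  finally show ?thesis .
qed

lemma givens_orthogonal:
  assumes "is_givens N p q G"
  shows "transpose_mat G * G = 1\<^sub>m N" and "G * transpose_mat G = 1\<^sub>m N"
proof -
  obtain c s where cs: "c\<^sup>2 + s\<^sup>2 = 1" and G: "G = givens_mat N p q c s"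
    and pq: "p \<noteq> q" "1 \<le> p" "p \<le> N" "1 \<le> q" "q \<le> N"
    using assms unfolding is_givens_def by auto
  have GG: "transpose_mat G * G = 1\<^sub>m N"
  proof (rule eq_matI)
    fix i j assume "i < dim_row (1\<^sub>m N)" "j < dim_col (1\<^sub>m N)"
    then have ij: "i < N" "j < N" by auto
    show "(transpose_mat G * G) $$ (i, j) = 1\<^sub>m N $$ (i, j)"
      unfolding G transpose_givens_mult_index[OF pq givens_mat_carrier ij]
      using ij pq cs by (auto simp: givens_mat_index power2_eq_square algebra_simps)
  qed (auto simp: G)
  then show "transpose_mat G * G = 1\<^sub>m N" .
  show "G * transpose_mat G = 1\<^sub>m N"
    by (rule mat_mult_left_right_inverse[OF _ _ GG]) (auto simp: G)
qed

lemma alg2_run_orthogonal_factorization: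
  assumes "alg2_run N st R Q R' Q'"
    and "R \<in> carrier_mat N m" "Q \<in> carrier_mat N N" "transpose_mat Q * Q = 1\<^sub>m N"
  shows "R' \<in> carrier_mat N m \<and> Q' \<in> carrier_mat N N \<and> transpose_mat Q' * Q' = 1\<^sub>m N \<and>
    Q' * R' = Q * R"
  using assms
proof (induction rule: alg2_run.induct)
  case (run_nil R Q)
  then show ?case by simp
next
  case (run_cons p q G R j st Q R' Q')
  have G: "G \<in> carrier_mat N N"
    using run_cons.hyps(1) unfolding is_givens_def by auto
  note GG = givens_orthogonal[OF run_cons.hyps(1)]
  have R1: "transpose_mat G * R \<in> carrier_mat N m" and Q1: "Q * G \<in> carrier_mat N N"
    using G run_cons.prems by auto
  have "transpose_mat (Q * G) * (Q * G) = transpose_mat G * ((transpose_mat Q * Q) * G)"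
    using G run_cons.prems(2) by (simp add: transpose_mult assoc_mult_mat[of _ N N _ N _ N])
  also have "\<dots> = 1\<^sub>m N" using G GG(1) run_cons.prems(3) by simp
  finally have O1: "transpose_mat (Q * G) * (Q * G) = 1\<^sub>m N" .
  have "(Q * G) * (transpose_mat G * R) = Q * ((G * transpose_mat G) * R)"
    using G run_cons.prems(1,2) by (simp add: assoc_mult_mat[of _ N N _ N _ m])
  also have "\<dots> = Q * R" using GG(2) run_cons.prems(1) by simp
  finally show ?case using run_cons.IH[OF R1 Q1 O1] by simp
qed

lemma alg2_run_Nil_iff: "alg2_run N [] R Q R' Q' \<longleftrightarrow> R' = R \<and> Q' = Q"
  by (auto elim: alg2_run.cases intro: alg2_run.intros)

lemma alg2_run_appendD:
  assumes "alg2_run N (xs @ ys) R Q R' Q'"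
  shows "\<exists>R'' Q''. alg2_run N xs R Q R'' Q'' \<and> alg2_run N ys R'' Q'' R' Q'"
  using assms
proof (induction xs arbitrary: R Q)
  case Nil
  then show ?case by (auto intro: alg2_run.intros)
next
  case (Cons a xs)
  obtain p q j where a: "a = (p, q, j)" by (cases a)
  from Cons.prems[unfolded a] obtain G where G: "is_givens N p q G"
    "(transpose_mat G * R) $$ (q - 1, j - 1) = 0"
    "alg2_run N (xs @ ys) (transpose_mat G * R) (Q * G) R' Q'"
    by (cases rule: alg2_run.cases) auto
  with Cons.IH show ?case unfolding a by (blast intro: alg2_run.run_cons)
qed

lemma alg2_run_concat_induct:
  assumes "alg2_run N (concat (map g [a..<c])) R Q R' Q'" "a \<le> c" "P a R"
    and "\<And>m R Q R1 Q1. a \<le> m \<Longrightarrow> m < c \<Longrightarrow> P m R \<Longrightarrow> alg2_run N (g m) R Q R1 Q1 \<Longrightarrow> P (Suc m) R1"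
  shows "P c R'"
  using assms
proof (induction c arbitrary: R' Q')
  case 0
  then show ?case by (simp add: alg2_run_Nil_iff)
next
  case (Suc c)
  show ?case
  proof (cases "a = Suc c")
    case True
    then show ?thesis using Suc.prems by (simp add: alg2_run_Nil_iff)
  next
    case False
    then have ac: "a \<le> c" using Suc.prems(2) by simp
    then have "alg2_run N (concat (map g [a..<c]) @ g c) R Q R' Q'" using Suc.prems(1) by simp
    then obtain R'' Q'' where r1: "alg2_run N (concat (map g [a..<c])) R Q R'' Q''"
      and r2: "alg2_run N (g c) R'' Q'' R' Q'" by (blast dest: alg2_run_appendD)
    have "P c R''" using Suc.IH[OF r1 ac Suc.prems(3)] Suc.prems(4) by simp
    then show ?thesis using Suc.prems(4)[OF ac _ _ r2] by simp
  qed
qed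

lemma alg2_run_map_induct:
  assumes "alg2_run N (map f [a..<c]) R Q R' Q'" "a \<le> c" "P a R"
    and "\<And>m R Q R1 Q1. a \<le> m \<Longrightarrow> m < c \<Longrightarrow> P m R \<Longrightarrow> alg2_run N [f m] R Q R1 Q1 \<Longrightarrow> P (Suc m) R1"
  shows "P c R'"
proof -
  have "map f [a..<c] = concat (map (\<lambda>m. [f m]) [a..<c])" by (induction "[a..<c]") auto
  then show ?thesis using alg2_run_concat_induct[of N "\<lambda>m. [f m]" a c R Q R' Q' P] assms by simp
qed

text \<open>Zero patterns are predicates on 1-based positions (row, column), like the steps of
  Algorithm 2.\<close>

definition vanishes_on :: "nat \<Rightarrow> real mat \<Rightarrow> (nat \<Rightarrow> nat \<Rightarrow> bool) \<Rightarrow> bool" where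
  "vanishes_on n R Z \<longleftrightarrow> R \<in> carrier_mat (2 * n) n \<and>
     (\<forall>r c. 1 \<le> r \<longrightarrow> r \<le> 2 * n \<longrightarrow> 1 \<le> c \<longrightarrow> c \<le> n \<longrightarrow> Z r c \<longrightarrow> R $$ (r - 1, c - 1) = 0)"

lemma vanishes_on_mono:
  assumes "vanishes_on n R Z"
    and "\<And>r c. 1 \<le> r \<Longrightarrow> r \<le> 2 * n \<Longrightarrow> 1 \<le> c \<Longrightarrow> c \<le> n \<Longrightarrow> Z' r c \<Longrightarrow> Z r c"
  shows "vanishes_on n R Z'"
  using assms unfolding vanishes_on_def by blast

lemma alg2_step_vanishes_on:
  assumes run: "alg2_run (2 * n) [(p, q, j)] R Q R1 Q1" and R: "vanishes_on n R Z"
    and Z': "\<And>r c. 1 \<le> r \<Longrightarrow> r \<le> 2 * n \<Longrightarrow> 1 \<le> c \<Longrightarrow> c \<le> n \<Longrightarrow> Z' r c \<Longrightarrow>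
        (if r = p \<or> r = q then (Z p c \<and> Z q c) \<or> (r = q \<and> c = j) else Z r c)"
  shows "vanishes_on n R1 Z'"
proof -
  from run obtain G where G: "is_givens (2 * n) p q G"
    and annihilated: "(transpose_mat G * R) $$ (q - 1, j - 1) = 0"
    and R1: "R1 = transpose_mat G * R"
    by (cases rule: alg2_run.cases) (auto simp: alg2_run_Nil_iff)
  obtain c s where G': "G = givens_mat (2 * n) p q c s"
    and pq: "p \<noteq> q" "1 \<le> p" "p \<le> 2 * n" "1 \<le> q" "q \<le> 2 * n"
    using G unfolding is_givens_def by auto
  have Rc: "R \<in> carrier_mat (2 * n) n"
    and zero: "\<And>r c. 1 \<le> r \<Longrightarrow> r \<le> 2 * n \<Longrightarrow> 1 \<le> c \<Longrightarrow> c \<le> n \<Longrightarrow> Z r c \<Longrightarrow>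
      R $$ (r - 1, c - 1) = 0"
    using R unfolding vanishes_on_def by blast+
  note rotated = transpose_givens_mult_index[OF pq Rc]
  show ?thesis unfolding vanishes_on_def
  proof (intro conjI allI impI)
    show "R1 \<in> carrier_mat (2 * n) n" unfolding R1 G' by (rule mult_carrier_mat[OF _ Rc]) simp
    fix r c' assume r: "1 \<le> r" "r \<le> 2 * n" and c: "1 \<le> c'" "c' \<le> n" and z: "Z' r c'"
    note cases = Z'[OF r c z]
    have i: "r - 1 < 2 * n" "c' - 1 < n" using r c by auto
    show "R1 $$ (r - 1, c' - 1) = 0"
    proof (cases "r = p \<or> r = q")
      case True
      show ?thesis
      proof (cases "r = q \<and> c' = j")
        case True
        then show ?thesis using annihilated R1 by simp
      next
        case False
        with cases \<open>r = p \<or> r = q\<close> have "Z p c' \<and> Z q c'" by auto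
        then have "R $$ (p - 1, c' - 1) = 0" "R $$ (q - 1, c' - 1) = 0" using zero pq c by auto
        then show ?thesis unfolding R1 G' rotated[OF i] using \<open>r = p \<or> r = q\<close> by auto
      qed
    next
      case False
      with cases have "R $$ (r - 1, c' - 1) = 0" using zero r c by auto
      moreover have "r - 1 \<noteq> p - 1" "r - 1 \<noteq> q - 1" using False r pq by auto
      ultimately show ?thesis unfolding R1 G' rotated[OF i] by simp
    qed
  qed
qed

definition band_pattern :: "nat \<Rightarrow> nat \<Rightarrow> nat \<Rightarrow> nat \<Rightarrow> bool" where
  "band_pattern n b r c \<longleftrightarrow> (if r \<le> n then c + b < r \<or> r + b < c else c \<noteq> r - n)"

text \<open>The zero pattern at the start of step \<open>i\<close> of the outer loop: rows \<open>1..i-1\<close> are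
  finished, rows \<open>i..n\<close> keep the band of \<open>A\<close> right of column \<open>i - 1\<close>, row \<open>n + 1\<close> is
  supported on columns \<open>i..i+b-1\<close>, rows \<open>n+2..n+i-1\<close> vanish, and each row \<open>n + j\<close>,
  \<open>j \<ge> i\<close>, has its diagonal entry at column \<open>j\<close> and fill-in up to column \<open>i + b - 2\<close>.\<close>

definition stage_pattern :: "nat \<Rightarrow> nat \<Rightarrow> nat \<Rightarrow> nat \<Rightarrow> nat \<Rightarrow> bool" where
  "stage_pattern n b i r c \<longleftrightarrow>
     (if r < i then c < r
      else if r \<le> n then c < i \<or> c + b < r \<or> r + b < c
      else if r = n + 1 then c < i \<or> i + b < c + 1
      else if r < n + i then True
      else c + n < r \<or> (r - n < c \<and> i + b < c + 2))"

text \<open>The patterns just before the rotation with row \<open>m\<close> (resp. \<open>n + m\<close>) in the first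
  sweep and in steps (b) and (d) of the outer loop.\<close>

definition first_sweep_pattern :: "nat \<Rightarrow> nat \<Rightarrow> nat \<Rightarrow> nat \<Rightarrow> nat \<Rightarrow> bool" where
  "first_sweep_pattern n b m r c \<longleftrightarrow>
     (if r = 1 then m + b \<le> c
      else if r < m then c < 2 \<or> r + b < c
      else if r \<le> n then c + b < r \<or> r + b < c
      else if r = n + 1 then c < 2 \<or> b + 1 < c
      else c \<noteq> r - n)"

definition bottom_sweep_pattern :: "nat \<Rightarrow> nat \<Rightarrow> nat \<Rightarrow> nat \<Rightarrow> nat \<Rightarrow> nat \<Rightarrow> bool" where
  "bottom_sweep_pattern n b i m r c \<longleftrightarrow>
     (if r < i then c < r
      else if r \<le> n then c < i \<or> c + b < r \<or> r + b < c
      else if r = n + 1 then c < i \<or> i + b < c + 1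
      else if r < n + i then True
      else if r = n + i then c < m \<or> i + b < c + 1
      else c + n < r \<or> (r - n < c \<and> i + b < c + 1))"

definition top_sweep_pattern :: "nat \<Rightarrow> nat \<Rightarrow> nat \<Rightarrow> nat \<Rightarrow> nat \<Rightarrow> nat \<Rightarrow> bool" where
  "top_sweep_pattern n b i m r c \<longleftrightarrow>
     (if r < i then c < r
      else if r = i then c < i \<or> m + b \<le> c
      else if r < m then c < i + 1 \<or> r + b < c
      else if r \<le> n then c < i \<or> c + b < r \<or> r + b < c
      else if r = n + 1 then c < i + 1 \<or> i + b < c
      else if r \<le> n + i then True
      else c + n < r \<or> (r - n < c \<and> i + b < c + 1))"

lemma stacked_identity_carrier:
  "A \<in> carrier_mat n n \<Longrightarrow> A @\<^sub>r 1\<^sub>m n \<in> carrier_mat (2 * n) n"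
  using carrier_append_rows[of A n n "1\<^sub>m n" n] by (simp add: mult_2)

lemma stacked_identity_index:
  assumes "A \<in> carrier_mat n n" "i < 2 * n" "j < n"
  shows "(A @\<^sub>r 1\<^sub>m n) $$ (i, j) = (if i < n then A $$ (i, j) else if i - n = j then 1 else 0)"
  using assms unfolding append_rows_def by (auto simp: index_mat_four_block)

lemma stacked_identity_vanishes_on_band_pattern:
  assumes A: "A \<in> carrier_mat n n" and band: "bandwidth_le A b"
  shows "vanishes_on n (A @\<^sub>r 1\<^sub>m n) (band_pattern n b)"
  unfolding vanishes_on_def
proof (intro conjI allI impI)
  show "A @\<^sub>r 1\<^sub>m n \<in> carrier_mat (2 * n) n" using stacked_identity_carrier[OF A] .
  fix r c assume r: "1 \<le> r" "r \<le> 2 * n" and c: "1 \<le> c" "c \<le> n" and z: "band_pattern n b r c"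
  show "(A @\<^sub>r 1\<^sub>m n) $$ (r - 1, c - 1) = 0"
  proof (cases "r \<le> n")
    case True
    then have "b < (if r - 1 \<le> c - 1 then (c - 1) - (r - 1) else (r - 1) - (c - 1))"
      using z r c unfolding band_pattern_def by auto
    moreover have "r - 1 < dim_row A" "c - 1 < dim_col A" using A True r c by auto
    ultimately have "A $$ (r - 1, c - 1) = 0"
      using band unfolding bandwidth_le_def by blast
    then show ?thesis using stacked_identity_index[OF A] True r c by simp
  next
    case False
    then show ?thesis using stacked_identity_index[OF A] z r c unfolding band_pattern_def by auto
  qed
qed

definition alg2_first_sweep :: "nat \<Rightarrow> nat \<Rightarrow> (nat \<times> nat \<times> nat) list" where
  "alg2_first_sweep n b = [(1, n + 1, 1)] @ map (\<lambda>j. (1, j, 1)) [2..<min n (b + 1) + 1]"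

definition alg2_stage :: "nat \<Rightarrow> nat \<Rightarrow> nat \<Rightarrow> (nat \<times> nat \<times> nat) list" where
  "alg2_stage n b i =
     [(n + 1, n + i, i)] @
     map (\<lambda>j. (n + j, n + i, j)) [i + 1..<min n (b + i - 1) + 1] @
     [(i, n + 1, i)] @
     (if i < n then map (\<lambda>j. (i, j, i)) [i + 1..<min n (b + i) + 1] else [])"

lemma alg2_steps_eq: "alg2_steps n b = alg2_first_sweep n b @ concat (map (alg2_stage n b) [2..<n + 1])"
  unfolding alg2_steps_def alg2_first_sweep_def alg2_stage_def by simp

lemma first_sweep_vanishes_on:
  assumes "alg2_run (2 * n) (alg2_first_sweep n b) R Q R' Q'"
    and "vanishes_on n R (band_pattern n b)" and "1 < b" "b < n"
  shows "vanishes_on n R' (stage_pattern n b 2)"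
proof -
  from alg2_run_appendD[OF assms(1)[unfolded alg2_first_sweep_def]] obtain R1 Q1
    where r1: "alg2_run (2 * n) [(1, n + 1, 1)] R Q R1 Q1"
      and r2: "alg2_run (2 * n) (map (\<lambda>j. (1, j, 1)) [2..<min n (b + 1) + 1]) R1 Q1 R' Q'"
    by blast
  have R1: "vanishes_on n R1 (first_sweep_pattern n b 2)"
    by (rule alg2_step_vanishes_on[OF r1 assms(2)])
      (use assms(3,4) in \<open>auto simp: first_sweep_pattern_def band_pattern_def split: if_splits\<close>)
  have "vanishes_on n R' (first_sweep_pattern n b (min n (b + 1) + 1))"
  proof (rule alg2_run_map_induct[where P = "\<lambda>m R. vanishes_on n R (first_sweep_pattern n b m)", OF r2 _ R1])
    fix m R Q R1 Q1 assume m: "2 \<le> m" "m < min n (b + 1) + 1"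
      and R: "vanishes_on n R (first_sweep_pattern n b m)"
      and run: "alg2_run (2 * n) [(1, m, 1)] R Q R1 Q1"
    show "vanishes_on n R1 (first_sweep_pattern n b (Suc m))"
      by (rule alg2_step_vanishes_on[OF run R])
        (use assms(3,4) m in \<open>auto simp: first_sweep_pattern_def split: if_splits\<close>)
  qed (use assms(3,4) in auto)
  then show ?thesis
    by (rule vanishes_on_mono)
      (use assms(3,4) in \<open>auto simp: first_sweep_pattern_def stage_pattern_def split: if_splits\<close>)
qed

lemma stage_vanishes_on:
  assumes run: "alg2_run (2 * n) (alg2_stage n b i) R Q R' Q'"
    and R: "vanishes_on n R (stage_pattern n b i)" and b: "1 < b" "b < n" and i: "2 \<le> i" "i \<le> n"
  shows "vanishes_on n R' (stage_pattern n b (Suc i))"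
proof -
  from run[unfolded alg2_stage_def] obtain R1 Q1 R2 Q2 R3 Q3 where
    ra: "alg2_run (2 * n) [(n + 1, n + i, i)] R Q R1 Q1" and
    rb: "alg2_run (2 * n) (map (\<lambda>j. (n + j, n + i, j)) [i + 1..<min n (b + i - 1) + 1]) R1 Q1 R2 Q2" and
    rc: "alg2_run (2 * n) [(i, n + 1, i)] R2 Q2 R3 Q3" and
    rd: "alg2_run (2 * n) (if i < n then map (\<lambda>j. (i, j, i)) [i + 1..<min n (b + i) + 1] else [])
      R3 Q3 R' Q'"
    by (blast dest: alg2_run_appendD)
  have R1: "vanishes_on n R1 (bottom_sweep_pattern n b i (i + 1))"
    by (rule alg2_step_vanishes_on[OF ra R])
      (use b i in \<open>auto simp: bottom_sweep_pattern_def stage_pattern_def split: if_splits\<close>)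
  have R2: "vanishes_on n R2 (bottom_sweep_pattern n b i (min n (b + i - 1) + 1))"
  proof (rule alg2_run_map_induct[where P = "\<lambda>m R. vanishes_on n R (bottom_sweep_pattern n b i m)",
        OF rb _ R1])
    fix m R Q R1 Q1 assume m: "i + 1 \<le> m" "m < min n (b + i - 1) + 1"
      and R: "vanishes_on n R (bottom_sweep_pattern n b i m)"
      and run: "alg2_run (2 * n) [(n + m, n + i, m)] R Q R1 Q1"
    show "vanishes_on n R1 (bottom_sweep_pattern n b i (Suc m))"
      by (rule alg2_step_vanishes_on[OF run R])
        (use b m i in \<open>auto simp: bottom_sweep_pattern_def split: if_splits\<close>)
  qed (use b i in auto)
  have R3: "vanishes_on n R3 (top_sweep_pattern n b i (i + 1))"
    by (rule alg2_step_vanishes_on[OF rc R2])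
      (use b i in \<open>auto simp: bottom_sweep_pattern_def top_sweep_pattern_def split: if_splits\<close>)
  have "vanishes_on n R' (top_sweep_pattern n b i (min n (b + i) + 1))"
  proof (cases "i < n")
    case True
    show ?thesis
    proof (rule alg2_run_map_induct[where P = "\<lambda>m R. vanishes_on n R (top_sweep_pattern n b i m)",
          OF rd[simplified True if_True] _ R3])
      fix m R Q R1 Q1 assume m: "i + 1 \<le> m" "m < min n (b + i) + 1"
        and R: "vanishes_on n R (top_sweep_pattern n b i m)"
        and run: "alg2_run (2 * n) [(i, m, i)] R Q R1 Q1"
      show "vanishes_on n R1 (top_sweep_pattern n b i (Suc m))"
        by (rule alg2_step_vanishes_on[OF run R])
          (use b m i in \<open>auto simp: top_sweep_pattern_def split: if_splits\<close>)
    qed (use b True in auto)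
  next
    case False
    then have "R' = R3" and "min n (b + i) + 1 = i + 1" using rd i by (auto simp: alg2_run_Nil_iff)
    then show ?thesis using R3 by simp
  qed
  then show ?thesis
    by (rule vanishes_on_mono) (use b i in \<open>auto simp: top_sweep_pattern_def stage_pattern_def split: if_splits\<close>)
qed

lemma alg2_upper_triangular:
  assumes A: "A \<in> carrier_mat n n" and band: "bandwidth_le A b" and b: "1 < b" "b < n"
    and run: "alg2_run (2 * n) (alg2_steps n b) (A @\<^sub>r 1\<^sub>m n) Q0 R Q"
  shows "\<forall>i j. i < 2 * n \<longrightarrow> j < n \<longrightarrow> j < i \<longrightarrow> R $$ (i, j) = 0"
proof -
  from alg2_run_appendD[OF run[unfolded alg2_steps_eq]] obtain R1 Q1 where
    r1: "alg2_run (2 * n) (alg2_first_sweep n b) (A @\<^sub>r 1\<^sub>m n) Q0 R1 Q1"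
    and r2: "alg2_run (2 * n) (concat (map (alg2_stage n b) [2..<n + 1])) R1 Q1 R Q" by blast
  have R1: "vanishes_on n R1 (stage_pattern n b 2)"
    using first_sweep_vanishes_on[OF r1 stacked_identity_vanishes_on_band_pattern[OF A band] b] .
  have R: "vanishes_on n R (stage_pattern n b (n + 1))"
    by (rule alg2_run_concat_induct[where P = "\<lambda>i R. vanishes_on n R (stage_pattern n b i)", OF r2 _ R1])
      (use b in \<open>auto intro: stage_vanishes_on\<close>)
  have zero: "R $$ (r - 1, c - 1) = 0"
    if "1 \<le> r" "r \<le> 2 * n" "1 \<le> c" "c \<le> n" "stage_pattern n b (n + 1) r c" for r c
    using R that unfolding vanishes_on_def by blast
  show ?thesis
  proof (intro allI impI)
    fix i j assume ij: "i < 2 * n" "j < n" "j < i"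
    then have "stage_pattern n b (n + 1) (Suc i) (Suc j)" by (simp add: stage_pattern_def)
    then show "R $$ (i, j) = 0" using zero[of "Suc i" "Suc j"] ij by simp
  qed
qed

lemma alg2_qr_factorization:
  assumes A: "A \<in> carrier_mat n n" and band: "bandwidth_le A b" and b: "1 < b" "b < n"
    and run: "alg2_run (2 * n) (alg2_steps n b) (A @\<^sub>r 1\<^sub>m n) (1\<^sub>m (2 * n)) R Q"
  shows "R \<in> carrier_mat (2 * n) n" and "Q \<in> carrier_mat (2 * n) (2 * n)"
    and "transpose_mat Q * Q = 1\<^sub>m (2 * n)" and "Q * R = A @\<^sub>r 1\<^sub>m n"
    and "\<forall>i j. i < 2 * n \<longrightarrow> j < n \<longrightarrow> j < i \<longrightarrow> R $$ (i, j) = 0"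
  using alg2_run_orthogonal_factorization[OF run stacked_identity_carrier[OF A]]
    stacked_identity_carrier[OF A] alg2_upper_triangular[OF A band b run] by auto

lemma symmetric_mat_index_swap:
  assumes "A \<in> carrier_mat n n" and "transpose_mat A = A" and "i < n" "j < n"
  shows "A $$ (j, i) = A $$ (i, j)"
proof -
  have "transpose_mat A $$ (i, j) = A $$ (j, i)" using assms(1,3,4) by simp
  then show ?thesis using assms(2) by simp
qed

definition lower_left_block :: "nat \<Rightarrow> 'a mat \<Rightarrow> 'a mat" where
  "lower_left_block n Q = mat n n (\<lambda>(i, j). Q $$ (n + i, j))"

lemma mult_upper_triangular_index:
  assumes Q: "Q \<in> carrier_mat m' m" and R: "R \<in> carrier_mat m n" and "n \<le> m"
    and upper: "\<forall>i j. i < m \<longrightarrow> j < n \<longrightarrow> j < i \<longrightarrow> R $$ (i, j) = 0"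
    and i: "i < m'" and j: "j < n"
  shows "(Q * R) $$ (i, j) = (\<Sum>l<n. Q $$ (i, l) * R $$ (l, j))"
proof -
  have "(Q * R) $$ (i, j) = (\<Sum>l\<in>{0..<m}. Q $$ (i, l) * R $$ (l, j))"
    using Q R i j by (simp add: scalar_prod_def)
  also have "\<dots> = (\<Sum>l\<in>{0..<n}. Q $$ (i, l) * R $$ (l, j))"
    using upper j \<open>n \<le> m\<close> by (intro sum.mono_neutral_right) auto
  finally show ?thesis by (simp add: lessThan_atLeast0)
qed

text \<open>Since \<open>R\<close> is upper triangular, the first \<open>n\<close> columns of \<open>Q\<close> form a factorization
  \<open>[A; I] = [W; V] R\<^sub>1\<close> with \<open>R\<^sub>1\<close> square; so \<open>V = R\<^sub>1\<^sup>-\<^sup>1\<close> and \<open>W = A V\<close>.\<close>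

lemma qr_stacked_identity_top_block:
  fixes A Q R :: "'a :: field mat"
  assumes A: "A \<in> carrier_mat n n" and Q: "Q \<in> carrier_mat (2 * n) (2 * n)"
    and R: "R \<in> carrier_mat (2 * n) n"
    and upper: "\<forall>i j. i < 2 * n \<longrightarrow> j < n \<longrightarrow> j < i \<longrightarrow> R $$ (i, j) = 0"
    and QR: "Q * R = A @\<^sub>r 1\<^sub>m n"
    and i: "i < n" and c: "c < n"
  shows "Q $$ (i, c) = (A * lower_left_block n Q) $$ (i, c)"
proof -
  define W where "W = mat n n (\<lambda>(i, j). Q $$ (i, j))"
  define V where "V = lower_left_block n Q"
  define R1 where "R1 = mat n n (\<lambda>(i, j). R $$ (i, j))"
  have W: "W \<in> carrier_mat n n" and V: "V \<in> carrier_mat n n" and R1: "R1 \<in> carrier_mat n n"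
    by (simp_all add: W_def V_def R1_def lower_left_block_def)
  have QR_index: "(Q * R) $$ (r, j) = (\<Sum>l<n. Q $$ (r, l) * R $$ (l, j))" if "r < 2 * n" "j < n" for r j
    using mult_upper_triangular_index[OF Q R _ upper that] by simp
  have WR: "W * R1 = A"
  proof (rule eq_matI)
    fix r j assume "r < dim_row A" "j < dim_col A"
    then have rj: "r < n" "j < n" using A by auto
    have "(W * R1) $$ (r, j) = (Q * R) $$ (r, j)"
      using rj W R1 QR_index[of r j] by (simp add: W_def R1_def scalar_prod_def lessThan_atLeast0)
    then show "(W * R1) $$ (r, j) = A $$ (r, j)"
      using rj stacked_identity_index[OF A, of r j] by (simp add: QR)
  qed (use A W R1 in auto)
  have "V * R1 = 1\<^sub>m n"
  proof (rule eq_matI)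
    fix r j assume "r < dim_row (1\<^sub>m n)" "j < dim_col (1\<^sub>m n)"
    then have rj: "r < n" "j < n" by auto
    have "(V * R1) $$ (r, j) = (Q * R) $$ (n + r, j)"
      using rj V R1 QR_index[of "n + r" j] by (simp add: V_def R1_def lower_left_block_def scalar_prod_def lessThan_atLeast0)
    then show "(V * R1) $$ (r, j) = 1\<^sub>m n $$ (r, j)"
      using rj stacked_identity_index[OF A, of "n + r" j] by (simp add: QR)
  qed (use V R1 in auto)
  then have "R1 * V = 1\<^sub>m n" using mat_mult_left_right_inverse[OF V R1] by blast
  then have "W = W * (R1 * V)" using W by simp
  also have "\<dots> = A * V" using W R1 V by (simp add: assoc_mult_mat[symmetric] WR)
  finally have "W = A * V" .
  moreover have "Q $$ (i, c) = W $$ (i, c)" using i c by (simp add: W_def)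
  ultimately show ?thesis by (simp add: V_def)
qed

text \<open>Orthogonality gives \<open>R = Q\<^sup>T [A; I]\<close>, whose first \<open>n\<close> rows are \<open>(A W + V)\<^sup>T\<close> for
  symmetric \<open>A\<close>; as \<open>R\<close> is upper triangular, \<open>A W + V = A (A V) + V\<close> is lower triangular.\<close>

lemma qr_stacked_identity_lower_triangular:
  fixes A Q R :: "'a :: field mat"
  assumes A: "A \<in> carrier_mat n n" and sym: "transpose_mat A = A"
    and Q: "Q \<in> carrier_mat (2 * n) (2 * n)" and orth: "transpose_mat Q * Q = 1\<^sub>m (2 * n)"
    and R: "R \<in> carrier_mat (2 * n) n"
    and upper: "\<forall>i j. i < 2 * n \<longrightarrow> j < n \<longrightarrow> j < i \<longrightarrow> R $$ (i, j) = 0"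
    and QR: "Q * R = A @\<^sub>r 1\<^sub>m n"
    and jc: "j < c" "c < n"
  shows "(A * (A * lower_left_block n Q) + lower_left_block n Q) $$ (j, c) = 0"
proof -
  define V where "V = lower_left_block n Q"
  have V: "V \<in> carrier_mat n n" by (simp add: V_def lower_left_block_def)
  let ?X = "A @\<^sub>r 1\<^sub>m n"
  have X: "?X \<in> carrier_mat (2 * n) n" using stacked_identity_carrier[OF A] .
  have "transpose_mat Q * ?X = (transpose_mat Q * Q) * R"
    using Q R by (simp add: QR[symmetric] assoc_mult_mat)
  also have "\<dots> = R" using R by (simp add: orth)
  finally have "0 = (transpose_mat Q * ?X) $$ (c, j)" using upper jc by simp
  also have "\<dots> = (\<Sum>r\<in>{0..<2 * n}. Q $$ (r, c) * ?X $$ (r, j))"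
    using Q X jc by (simp add: scalar_prod_def)
  also have "\<dots> = (\<Sum>r\<in>{0..<n}. Q $$ (r, c) * ?X $$ (r, j)) + (\<Sum>r\<in>{n..<2 * n}. Q $$ (r, c) * ?X $$ (r, j))"
    by (rule sum.atLeastLessThan_concat[symmetric]) auto
  also have "(\<Sum>r\<in>{0..<n}. Q $$ (r, c) * ?X $$ (r, j)) = (\<Sum>r\<in>{0..<n}. A $$ (j, r) * (A * V) $$ (r, c))"
  proof (rule sum.cong[OF refl])
    fix r assume "r \<in> {0..<n}"
    moreover have "A $$ (r, j) = A $$ (j, r)"
      using symmetric_mat_index_swap[OF A sym, of j r] jc \<open>r \<in> {0..<n}\<close> by simp
    ultimately show "Q $$ (r, c) * ?X $$ (r, j) = A $$ (j, r) * (A * V) $$ (r, c)"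
      using qr_stacked_identity_top_block[OF A Q R upper QR, of r c] stacked_identity_index[OF A, of r j] jc
      by (simp add: V_def)
  qed
  also have "\<dots> = (A * (A * V)) $$ (j, c)"
    using A V jc by (simp add: scalar_prod_def)
  also have "(\<Sum>r\<in>{n..<2 * n}. Q $$ (r, c) * ?X $$ (r, j)) = (\<Sum>r\<in>{n..<2 * n}. if r = n + j then Q $$ (r, c) else 0)"
    using stacked_identity_index[OF A] jc by (intro sum.cong) auto
  also have "\<dots> = V $$ (j, c)" using jc by (simp add: V_def lower_left_block_def)
  finally show ?thesis using A V jc by (simp add: V_def[symmetric])
qed

lemma rank_le_card_of_sum_products:
  fixes f g :: "nat \<Rightarrow> nat \<Rightarrow> 'a :: field"
  assumes "finite S"
  shows "vec_space.rank r (mat r m (\<lambda>(i, c). \<Sum>s\<in>S. f s i * g s c)) \<le> card S"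
  using assms
proof (induction S rule: finite_induct)
  case empty
  have "mat r m (\<lambda>(i, c). \<Sum>s\<in>{}. f s i * g s c) = 0\<^sub>m r m" by (intro eq_matI) auto
  then show ?case by (simp only: vec_space.rank_0I card.empty le_refl)
next
  case (insert x S)
  let ?B = "mat r m (\<lambda>(i, c). \<Sum>s\<in>S. f s i * g s c)" and ?C = "mat r m (\<lambda>(i, c). f x i * g x c)"
  have "mat r m (\<lambda>(i, c). \<Sum>s\<in>insert x S. f s i * g s c) = ?B + ?C"
    using insert by (intro eq_matI) auto
  moreover have "vec_space.rank r (?B + ?C) \<le> vec_space.rank r ?B + vec_space.rank r ?C"
    by (rule vec_space.rank_subadditive) auto
  moreover have "vec_space.rank r ?C \<le> 1"
    by (rule vec_space.rank_le_1_product_entries[of _ r m "f x" "g x"]) auto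
  ultimately show ?case using insert by simp
qed

lemma rank_mult_vec_supported_le:
  fixes B :: "'a :: field mat"
  assumes B: "B \<in> carrier_mat N N'" and S: "S \<subseteq> {..<N'}"
    and t: "\<And>c. c < m \<Longrightarrow> t c \<in> carrier_vec N'"
    and supp: "\<And>c s. c < m \<Longrightarrow> s < N' \<Longrightarrow> s \<notin> S \<Longrightarrow> t c $ s = 0"
    and rows: "d + k \<le> N"
  shows "vec_space.rank k (mat k m (\<lambda>(i, c). (B *\<^sub>v t c) $ (d + i))) \<le> card S"
proof -
  have "mat k m (\<lambda>(i, c). (B *\<^sub>v t c) $ (d + i)) = mat k m (\<lambda>(i, c). \<Sum>s\<in>S. B $$ (d + i, s) * t c $ s)"
  proof (rule eq_matI)
    fix i c assume "i < dim_row (mat k m (\<lambda>(i, c). \<Sum>s\<in>S. B $$ (d + i, s) * t c $ s))"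
      "c < dim_col (mat k m (\<lambda>(i, c). \<Sum>s\<in>S. B $$ (d + i, s) * t c $ s))"
    then have ic: "i < k" "c < m" by auto
    have "(B *\<^sub>v t c) $ (d + i) = (\<Sum>s\<in>{0..<N'}. B $$ (d + i, s) * t c $ s)"
      using B t[OF ic(2)] ic rows by (simp add: scalar_prod_def)
    also have "\<dots> = (\<Sum>s\<in>S. B $$ (d + i, s) * t c $ s)"
      using S supp[OF ic(2)] by (intro sum.mono_neutral_right) auto
    finally show "mat k m (\<lambda>(i, c). (B *\<^sub>v t c) $ (d + i)) $$ (i, c) =
        mat k m (\<lambda>(i, c). \<Sum>s\<in>S. B $$ (d + i, s) * t c $ s) $$ (i, c)"
      using ic by simp
  qed auto
  also have "vec_space.rank k \<dots> \<le> card S"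
    using rank_le_card_of_sum_products[of S k m "\<lambda>s i. B $$ (d + i, s)" "\<lambda>s c. t c $ s"] S
    by (simp add: finite_subset)
  finally show ?thesis .
qed

lemma sym_block_mat_mult_vec_eq_0:
  fixes A :: "real mat"
  assumes A: "A \<in> carrier_mat k k" and sym: "transpose_mat A = A" and v: "v \<in> carrier_vec (k + k)"
    and Mv: "four_block_mat A (1\<^sub>m k) (1\<^sub>m k) (- A) *\<^sub>v v = 0\<^sub>v (k + k)"
  shows "v = 0\<^sub>v (k + k)"
proof -
  define w y where "w = vec_first v k" and "y = vec_last v k"
  have w: "w \<in> carrier_vec k" and y: "y \<in> carrier_vec k" by (simp_all add: w_def y_def)
  have v_split: "v = w @\<^sub>v y" using v by (simp add: w_def y_def)
  have "four_block_mat A (1\<^sub>m k) (1\<^sub>m k) (- A) *\<^sub>v (w @\<^sub>v y) =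
      (A *\<^sub>v w + 1\<^sub>m k *\<^sub>v y) @\<^sub>v (1\<^sub>m k *\<^sub>v w + (- A) *\<^sub>v y)"
    by (rule four_block_mat_mult_vec[OF A _ _ _ w y]) (use A in auto)
  moreover have "0\<^sub>v (k + k) = 0\<^sub>v k @\<^sub>v (0\<^sub>v k :: real vec)" by (intro eq_vecI) auto
  ultimately have top: "A *\<^sub>v w + 1\<^sub>m k *\<^sub>v y = 0\<^sub>v k"
    and bottom: "1\<^sub>m k *\<^sub>v w + (- A) *\<^sub>v y = 0\<^sub>v k"
    using Mv append_vec_eq[of "A *\<^sub>v w + 1\<^sub>m k *\<^sub>v y" k "0\<^sub>v k"] A w y by (auto simp: v_split)
  have y_eq: "y = - (A *\<^sub>v w)"
  proof (rule eq_vecI)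
    fix i assume "i < dim_vec (- (A *\<^sub>v w))"
    then have i: "i < k" using A by simp
    have "(A *\<^sub>v w + 1\<^sub>m k *\<^sub>v y) $ i = 0" using top i by simp
    then show "y $ i = (- (A *\<^sub>v w)) $ i" using A y i by simp
  qed (use A y in simp)
  have w_eq: "w = A *\<^sub>v y"
  proof (rule eq_vecI)
    fix i assume "i < dim_vec (A *\<^sub>v y)"
    then have i: "i < k" using A by simp
    have "(1\<^sub>m k *\<^sub>v w + (- A) *\<^sub>v y) $ i = 0" using bottom i by simp
    then show "w $ i = (A *\<^sub>v y) $ i" using A w y i by (simp add: scalar_prod_def sum_negf)
  qed (use A w in simp)
  have "y \<bullet> y = - (y \<bullet> (A *\<^sub>v w))"
    using arg_cong[OF y_eq, of "\<lambda>u. y \<bullet> u"] A w y by simp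
  also have "\<dots> = - ((transpose_mat A *\<^sub>v y) \<bullet> w)"
    using A w y by (simp add: transpose_vec_mult_scalar)
  also have "\<dots> = - (w \<bullet> w)"
    by (simp add: sym w_eq[symmetric])
  finally have "y \<bullet> y + w \<bullet> w = 0" by simp
  moreover have "y \<bullet> y \<ge> 0" "w \<bullet> w \<ge> 0"
    using conjugate_square_ge_0_vec[of y] conjugate_square_ge_0_vec[of w] by simp_all
  ultimately have "y \<bullet> y = 0" "w \<bullet> w = 0" by linarith+
  then have "y = 0\<^sub>v k" "w = 0\<^sub>v k"
    using conjugate_square_eq_0_vec[OF y] conjugate_square_eq_0_vec[OF w] by simp_all
  then show ?thesis by (auto simp: v_split)
qed

lemma sym_block_mat_left_inverse:
  fixes A :: "real mat"
  assumes A: "A \<in> carrier_mat k k" and sym: "transpose_mat A = A"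
  obtains M' where "M' \<in> carrier_mat (k + k) (k + k)"
    and "M' * four_block_mat A (1\<^sub>m k) (1\<^sub>m k) (- A) = 1\<^sub>m (k + k)"
proof -
  let ?M = "four_block_mat A (1\<^sub>m k) (1\<^sub>m k) (- A)"
  have M: "?M \<in> carrier_mat (k + k) (k + k)" using A by auto
  have "det ?M \<noteq> 0"
    using sym_block_mat_mult_vec_eq_0[OF A sym] det_0_iff_vec_prod_zero[OF M] by blast
  from det_non_zero_imp_unit[OF M this, of "()"] that show ?thesis
    unfolding Units_def ring_mat_def by auto
qed

lemma lower_triangular_relation_block_system:
  fixes A V :: "'a :: comm_ring_1 mat"
  assumes A: "A \<in> carrier_mat n n" and V: "V \<in> carrier_mat n n"
    and lower: "\<And>j c. j < c \<Longrightarrow> c < n \<Longrightarrow> (A * (A * V) + V) $$ (j, c) = 0"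
    and c: "k \<le> c" "c < n"
  shows "four_block_mat (mat k k (\<lambda>(i, j). A $$ (i, j))) (1\<^sub>m k) (1\<^sub>m k) (- mat k k (\<lambda>(i, j). A $$ (i, j)))
      *\<^sub>v (vec k (\<lambda>i. (A * V) $$ (i, c)) @\<^sub>v vec k (\<lambda>i. V $$ (i, c)))
    = vec k (\<lambda>i. - (\<Sum>l\<in>{k..<n}. A $$ (i, l) * (A * V) $$ (l, c))) @\<^sub>v
      vec k (\<lambda>i. \<Sum>l\<in>{k..<n}. A $$ (i, l) * V $$ (l, c))"
    (is "four_block_mat ?A11 _ _ _ *\<^sub>v (?w @\<^sub>v ?y) = ?t1 @\<^sub>v ?t2")
proof -
  have A11: "?A11 \<in> carrier_mat k k" by simp
  have split: "(\<Sum>l\<in>{0..<n}. f l) = (\<Sum>l\<in>{0..<k}. f l) + (\<Sum>l\<in>{k..<n}. f l)" for f :: "nat \<Rightarrow> 'a"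
    using c by (intro sum.atLeastLessThan_concat[symmetric]) auto
  have "?A11 *\<^sub>v ?w + 1\<^sub>m k *\<^sub>v ?y = ?t1"
  proof (rule eq_vecI)
    fix i assume "i < dim_vec ?t1"
    then have i: "i < k" by simp
    have "(A * (A * V) + V) $$ (i, c) = 0" using lower i c by simp
    then show "(?A11 *\<^sub>v ?w + 1\<^sub>m k *\<^sub>v ?y) $ i = ?t1 $ i"
      using i c A V split[of "\<lambda>l. A $$ (i, l) * (A * V) $$ (l, c)"]
      by (simp add: scalar_prod_def eq_neg_iff_add_eq_0 add_ac)
  qed simp
  moreover have "1\<^sub>m k *\<^sub>v ?w + (- ?A11) *\<^sub>v ?y = ?t2"
  proof (rule eq_vecI)
    fix i assume "i < dim_vec ?t2"
    then have i: "i < k" by simp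
    then show "(1\<^sub>m k *\<^sub>v ?w + (- ?A11) *\<^sub>v ?y) $ i = ?t2 $ i"
      using i c A V split[of "\<lambda>l. A $$ (i, l) * V $$ (l, c)"]
      by (simp add: scalar_prod_def sum_negf)
  qed simp
  ultimately show ?thesis
    using four_block_mat_mult_vec[OF A11 one_carrier_mat one_carrier_mat uminus_carrier_mat[OF A11],
        of ?w ?y] by simp
qed

lemma off_diagonal_blocks_rank_le:
  fixes A V :: "real mat"
  assumes A: "A \<in> carrier_mat n n" and sym: "transpose_mat A = A" and band: "bandwidth_le A b"
    and V: "V \<in> carrier_mat n n"
    and lower: "\<And>j c. j < c \<Longrightarrow> c < n \<Longrightarrow> (A * (A * V) + V) $$ (j, c) = 0"
    and k: "k \<le> n"
  shows "vec_space.rank k (mat k (n - k) (\<lambda>(i, c). (A * V) $$ (i, k + c))) \<le> 2 * b"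
    and "vec_space.rank k (mat k (n - k) (\<lambda>(i, c). V $$ (i, k + c))) \<le> 2 * b"
proof -
  define A11 where "A11 = mat k k (\<lambda>(i, j). A $$ (i, j))"
  define M where "M = four_block_mat A11 (1\<^sub>m k) (1\<^sub>m k) (- A11)"
  have A11: "A11 \<in> carrier_mat k k" and M: "M \<in> carrier_mat (k + k) (k + k)"
    by (simp_all add: A11_def M_def)
  have "transpose_mat A11 = A11"
  proof (rule eq_matI)
    fix i j assume "i < dim_row A11" "j < dim_col A11"
    then have "i < k" "j < k" by (simp_all add: A11_def)
    then show "transpose_mat A11 $$ (i, j) = A11 $$ (i, j)"
      using symmetric_mat_index_swap[OF A sym, of i j] k by (simp add: A11_def)
  qed (simp_all add: A11_def)
  then obtain M' where M': "M' \<in> carrier_mat (k + k) (k + k)" and M'M: "M' * M = 1\<^sub>m (k + k)"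
    using sym_block_mat_left_inverse[OF A11] unfolding M_def by blast
  define t where "t c = vec k (\<lambda>i. - (\<Sum>l\<in>{k..<n}. A $$ (i, l) * (A * V) $$ (l, c))) @\<^sub>v
      vec k (\<lambda>i. \<Sum>l\<in>{k..<n}. A $$ (i, l) * V $$ (l, c))" for c
  have t: "t c \<in> carrier_vec (k + k)" for c by (simp add: t_def)
  have solved: "M' *\<^sub>v t c = vec k (\<lambda>i. (A * V) $$ (i, c)) @\<^sub>v vec k (\<lambda>i. V $$ (i, c))"
    if "k \<le> c" "c < n" for c
  proof -
    let ?z = "vec k (\<lambda>i. (A * V) $$ (i, c)) @\<^sub>v vec k (\<lambda>i. V $$ (i, c))"
    have z: "?z \<in> carrier_vec (k + k)" by simp
    have "M' *\<^sub>v t c = M' *\<^sub>v (M *\<^sub>v ?z)"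
      using lower_triangular_relation_block_system[OF A V lower that] by (simp add: M_def A11_def t_def)
    also have "\<dots> = (M' * M) *\<^sub>v ?z" using M' M z by simp
    finally show ?thesis using M'M z by simp
  qed
  define S where "S = {k - b..<k} \<union> {k + k - b..<k + k}"
  have coupling_zero: "A $$ (i, l) = 0" if "i + b < k" "k \<le> l" "l < n" for i l
    using band A that unfolding bandwidth_le_def by auto
  have supp: "t c $ s = 0" if "s < k + k" "s \<notin> S" for c s
  proof (cases "s < k")
    case True
    then have "s + b < k" using that by (auto simp: S_def)
    then show ?thesis using True coupling_zero by (simp add: t_def)
  next
    case False
    then have "s - k + b < k" using that by (auto simp: S_def)
    then show ?thesis using False that coupling_zero by (simp add: t_def)
  qed
  have card_S: "card S \<le> 2 * b"
    unfolding S_def by (rule order.trans[OF card_Un_le]) simp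
  have rank_le: "vec_space.rank k (mat k (n - k) (\<lambda>(i, c). (M' *\<^sub>v t (k + c)) $ (d + i))) \<le> 2 * b"
    if "d + k \<le> k + k" for d
  proof -
    have "vec_space.rank k (mat k (n - k) (\<lambda>(i, c). (M' *\<^sub>v t (k + c)) $ (d + i))) \<le> card S"
      by (rule rank_mult_vec_supported_le[OF M']) (use t supp that in \<open>auto simp: S_def\<close>)
    then show ?thesis using card_S by simp
  qed
  have "mat k (n - k) (\<lambda>(i, c). (A * V) $$ (i, k + c)) = mat k (n - k) (\<lambda>(i, c). (M' *\<^sub>v t (k + c)) $ (0 + i))"
    by (rule eq_matI) (simp_all add: solved)
  then show "vec_space.rank k (mat k (n - k) (\<lambda>(i, c). (A * V) $$ (i, k + c))) \<le> 2 * b"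
    using rank_le[of 0] by simp
  have "mat k (n - k) (\<lambda>(i, c). V $$ (i, k + c)) = mat k (n - k) (\<lambda>(i, c). (M' *\<^sub>v t (k + c)) $ (k + i))"
    by (rule eq_matI) (simp_all add: solved)
  then show "vec_space.rank k (mat k (n - k) (\<lambda>(i, c). V $$ (i, k + c))) \<le> 2 * b"
    using rank_le[of k] by simp
qed

lemma pick_atLeastLessThan:
  assumes "j < b - a"
  shows "pick {a..<b} j = a + j"
proof -
  have "{x \<in> {a..<b}. x < a + j} = {a..<a + j}" using assms by auto
  then have "card {x \<in> {a..<b}. x < a + j} = j" by simp
  then show ?thesis using pick_card_in_set[of "a + j" "{a..<b}"] assms by simp
qed

lemma submatrix_atLeastLessThan:
  assumes "b \<le> dim_row M" "d \<le> dim_col M"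
  shows "submatrix M {a..<b} {c..<d} = mat (b - a) (d - c) (\<lambda>(i, j). M $$ (a + i, c + j))"
proof -
  have "{i. i < dim_row M \<and> i \<in> {a..<b}} = {a..<b}" "{j. j < dim_col M \<and> j \<in> {c..<d}} = {c..<d}"
    using assms by auto
  then show ?thesis unfolding submatrix_def by (intro eq_matI) (auto simp: pick_atLeastLessThan)
qed

theorem theorem4p3:
  fixes A :: "real mat" and n b :: nat and R Q :: "real mat"
  assumes "A \<in> carrier_mat n n"
    and "transpose_mat A = A"
    and "bandwidth_le A b"
    and "1 < b" and "b < n"
    and "alg2_run (2 * n) (alg2_steps n b) (A @\<^sub>r 1\<^sub>m n) (1\<^sub>m (2 * n)) R Q"
  shows "\<forall>k. 1 \<le> k \<and> k < n \<longrightarrow>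
           vec_space.rank k (submatrix Q {0..<k} {k..<n}) \<le> 2 * b \<and>
           vec_space.rank k (submatrix Q {n..<n + k} {k..<n}) \<le> 2 * b"
proof (intro allI impI)
  note A = assms(1) and sym = assms(2)
  note qr = alg2_qr_factorization[OF A assms(3-6)]
  note R = qr(1) and Q = qr(2) and orth = qr(3) and QR = qr(4) and upper = qr(5)
  fix k assume k: "1 \<le> k \<and> k < n"
  define V where "V = lower_left_block n Q"
  have "submatrix Q {0..<k} {k..<n} = mat k (n - k) (\<lambda>(i, c). (A * V) $$ (i, k + c))"
    using Q k qr_stacked_identity_top_block[OF A Q R upper QR]
    by (auto simp: submatrix_atLeastLessThan V_def intro!: eq_matI)
  moreover have "submatrix Q {n..<n + k} {k..<n} = mat k (n - k) (\<lambda>(i, c). V $$ (i, k + c))"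
    using Q k by (auto simp: submatrix_atLeastLessThan V_def lower_left_block_def intro!: eq_matI)
  moreover note off_diagonal_blocks_rank_le[OF A sym assms(3), of V k]
    qr_stacked_identity_lower_triangular[OF A sym Q orth R upper QR]
  ultimately show "vec_space.rank k (submatrix Q {0..<k} {k..<n}) \<le> 2 * b \<and>
      vec_space.rank k (submatrix Q {n..<n + k} {k..<n}) \<le> 2 * b"
    using k by (simp add: V_def lower_left_block_def)
qed

end
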